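(* In the basic contact-tracing model (described in the context), for every $T\in\mathbb{N}$, every probability distribution $D$ on $\{0,1,2,\dots\}$, every $p_T\in(0,1]$ and every $\beta>0$, the policy that at every step queries a node of smallest recency present in the frontier is optimal.
   Context: Basic model. Fix $T\in\mathbb{N}$, a probability distribution $D$ on $\{0,1,2,\dots\}$, a constant $p_T\in(0,1]$ and a discount parameter $\beta>0$. Every node (individual) has a recency $h\in\{0,1,\dots,T\}$. Each node (whether an index case or a child of an infected node) is infected independently with probability $p_T$. If a node of recency $h$ is infected, then for each $j\in\{0,\dots,h-1\}$ it has $Z_j\sim D$ children of recency $j$, with all these counts independent across $j$ and across nodes and independent of the infection statuses; an uninfected node has no children that can be accessed. Contact tracing: at step $t=0$ the frontier is a given finite multiset of index cases with known recencies. At each step $t=0,1,2,\dots$ while the frontier is nonempty, the tracer selects one node of the frontier and queries it, removing it from the frontier. The query reveals the node's infection status; if the node is infected and has recency $h$, benefit $e^{-\beta(h+t)}$ is collected and its children (with their recencies) are added to the frontier; if it is uninfected, benefit $0$ is collected and nothing is added. Nodes of the same recency are indistinguishable before they are queried, so a policy is a (possibly history-dependent) rule choosing at each step which recency present in the frontier to query. A policy is optimal if for every initial frontier it maximizes the expected total collected benefit $\mathbb{E}\big[\sum_{t\ge 0}(\text{benefit collected at step } t)\big]$ over all policies. *)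

theory Defs
  imports "HOL-Probability.Probability"
begin

text \<open>Nodes are represented by their recency (a natural number).
  The frontier is a multiset of recencies.  The observation obtained when querying a node is
  None (uninfected) or Some zs (infected), where zs has length h (the recency of the queried
  node) and zs ! j is the number Z_j of children of recency j.\<close>

type_synonym ct_obs = "nat list option"

text \<open>History: list of (queried recency, observation), most recent query first.\<close>
type_synonym ct_hist = "(nat \<times> ct_obs) list"

type_synonym ct_policy = "nat multiset \<Rightarrow> ct_hist \<Rightarrow> nat"

definition ct_kids :: "nat list \<Rightarrow> nat multiset" where
  "ct_kids zs = (\<Sum>j<length zs. replicate_mset (zs ! j) j)"

fun ct_children_pmf :: "nat pmf \<Rightarrow> nat \<Rightarrow> nat list pmf" where
  "ct_children_pmf D 0 = return_pmf []"
| "ct_children_pmf D (Suc h) =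
     bind_pmf (ct_children_pmf D h) (\<lambda>zs. map_pmf (\<lambda>z. zs @ [z]) D)"

definition ct_outcome_pmf :: "nat pmf \<Rightarrow> real \<Rightarrow> nat \<Rightarrow> ct_obs pmf" where
  "ct_outcome_pmf D p h =
     bind_pmf (bernoulli_pmf p)
       (\<lambda>inf. if inf then map_pmf Some (ct_children_pmf D h) else return_pmf None)"

fun ct_frontier :: "nat multiset \<Rightarrow> ct_hist \<Rightarrow> nat multiset" where
  "ct_frontier F0 [] = F0"
| "ct_frontier F0 ((h, ob) # hs) =
     ct_frontier F0 hs - {#h#} + (case ob of None \<Rightarrow> {#} | Some zs \<Rightarrow> ct_kids zs)"

definition ct_benefit :: "real \<Rightarrow> nat \<Rightarrow> nat \<Rightarrow> ct_obs \<Rightarrow> ennreal" where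
  "ct_benefit \<beta> t h ob =
     (case ob of None \<Rightarrow> 0 | Some _ \<Rightarrow> ennreal (exp (- \<beta> * (real h + real t))))"

text \<open>Expected benefit collected during the next n steps, from history hs
  (the current step index is length hs).\<close>
fun ct_val :: "nat pmf \<Rightarrow> real \<Rightarrow> real \<Rightarrow> (ct_hist \<Rightarrow> nat) \<Rightarrow> nat multiset \<Rightarrow> nat \<Rightarrow> ct_hist \<Rightarrow> ennreal"
where
  "ct_val D p \<beta> \<pi> F0 0 hs = 0"
| "ct_val D p \<beta> \<pi> F0 (Suc n) hs =
     (if ct_frontier F0 hs = {#} then 0
      else (\<integral>\<^sup>+ ob. ct_benefit \<beta> (length hs) (\<pi> hs) ob + ct_val D p \<beta> \<pi> F0 n ((\<pi> hs, ob) # hs)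
              \<partial>measure_pmf (ct_outcome_pmf D p (\<pi> hs))))"

definition ct_expected_benefit ::
  "nat pmf \<Rightarrow> real \<Rightarrow> real \<Rightarrow> (ct_hist \<Rightarrow> nat) \<Rightarrow> nat multiset \<Rightarrow> ennreal" where
  "ct_expected_benefit D p \<beta> \<sigma> F0 = (SUP n. ct_val D p \<beta> \<sigma> F0 n [])"

definition ct_admissible :: "nat multiset \<Rightarrow> (ct_hist \<Rightarrow> nat) \<Rightarrow> bool" where
  "ct_admissible F0 \<sigma> \<longleftrightarrow>
     (\<forall>hs. ct_frontier F0 hs \<noteq> {#} \<longrightarrow> \<sigma> hs \<in># ct_frontier F0 hs)"

definition ct_optimal :: "nat \<Rightarrow> nat pmf \<Rightarrow> real \<Rightarrow> real \<Rightarrow> ct_policy \<Rightarrow> bool" where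
  "ct_optimal T D p \<beta> \<pi> \<longleftrightarrow>
     (\<forall>F0. (\<forall>h\<in>#F0. h \<le> T) \<longrightarrow>
        ct_admissible F0 (\<pi> F0) \<and>
        (\<forall>\<sigma>. ct_admissible F0 \<sigma> \<longrightarrow>
           ct_expected_benefit D p \<beta> \<sigma> F0 \<le> ct_expected_benefit D p \<beta> (\<pi> F0) F0))"

definition ct_greedy :: ct_policy where
  "ct_greedy F0 hs = Min (set_mset (ct_frontier F0 hs))"

end

(*
  Children always have smaller recency than their parent, so once the greedy policy queries a
  node of recency h it works off that node's entire subtree before touching anything else.
  Hence its value on a frontier x1 <= ... <= xk, in units of the current discount, is
  r x1 + l x1 * (r x2 + l x2 * (...)), where r h is the expected discounted benefit of the
  subtree of a node of recency h and l h the expected discount factor that processing this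
  subtree costs; both are defined by recursion on h.

  This greedy value satisfies the Bellman inequality: querying some b above the minimum m
  first is an exchange of two jobs.  The node b together with its children of recency below m
  forms a job whose discount has the same law as l m (those children are distributed like all
  children of a node of recency m) and whose reward is at most r m (its own benefit is
  discounted more, since b >= m); running m's subtree before it is never worse.  By induction,
  every policy collects at most the greedy value, and greedy collects it up to a geometric tail.
*)

theory Submission
  imports Defs
begin

lemma nn_integral_pmf_cong:
  assumes "\<And>x. x \<in> set_pmf M \<Longrightarrow> f x = g x"
  shows "(\<integral>\<^sup>+x. f x \<partial>measure_pmf M) = (\<integral>\<^sup>+x. g x \<partial>measure_pmf M)"
  by (rule nn_integral_cong_AE) (auto simp: AE_measure_pmf_iff assms)

lemma nn_integral_pmf_mono:
  assumes "\<And>x. x \<in> set_pmf M \<Longrightarrow> f x \<le> g x"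
  shows "(\<integral>\<^sup>+x. f x \<partial>measure_pmf M) \<le> (\<integral>\<^sup>+x. g x \<partial>measure_pmf M)"
  by (rule nn_integral_mono_AE) (auto simp: AE_measure_pmf_iff assms)

lemma sorted_list_of_multiset_union:
  fixes A B :: "'a::linorder multiset"
  assumes "\<forall>x\<in>#A. \<forall>y\<in>#B. x \<le> y"
  shows "sorted_list_of_multiset (A + B) = sorted_list_of_multiset A @ sorted_list_of_multiset B"
proof -
  let ?xs = "sorted_list_of_multiset A @ sorted_list_of_multiset B"
  have "sorted ?xs" using assms by (auto simp: sorted_append)
  moreover have "mset ?xs = A + B" by simp
  ultimately show ?thesis by (metis sorted_list_of_multiset_mset sorted_sort_id)
qed

lemma prod_list_sorted_list_of_multiset:
  "prod_list (map f (sorted_list_of_multiset A)) = (\<Prod>x\<in>#A. f x)"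
  by (metis mset_map mset_sorted_list_of_multiset prod_mset_prod_list)

lemma exchange_le_ennreal:
  fixes x r l :: ennreal
  assumes "x \<le> r" and "l \<le> 1"
  shows "x + r * l \<le> r + l * x"
proof -
  obtain d where d: "r = x + d" using assms(1) le_iff_add by blast
  have "l * d \<le> d" using assms(2) by (metis mult_right_mono mult_1 zero_le)
  then show ?thesis unfolding d by (simp add: algebra_simps add_left_mono)
qed

lemma ennreal_le_of_le_add_power:
  fixes a b c :: ennreal and q :: real
  assumes "0 \<le> q" and "q < 1" and "c < \<top>" and "\<And>n. a \<le> b + ennreal (q ^ n) * c"
  shows "a \<le> b"
proof -
  have "(\<lambda>n. ennreal (q ^ n)) \<longlonglongrightarrow> ennreal 0"
    using assms(1,2) by (intro tendsto_ennrealI LIMSEQ_power_zero) auto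
  then have "(\<lambda>n. c * ennreal (q ^ n)) \<longlonglongrightarrow> c * 0"
    using assms(3) by (intro ennreal_tendsto_cmult) auto
  then have "(\<lambda>n. b + ennreal (q ^ n) * c) \<longlonglongrightarrow> b + 0"
    by (intro tendsto_add tendsto_const) (simp add: mult.commute)
  then show ?thesis using assms(4) by (intro LIMSEQ_le_const) auto
qed

lemma length_ct_children_pmf: "zs \<in> set_pmf (ct_children_pmf D h) \<Longrightarrow> length zs = h"
  by (induction h arbitrary: zs) auto

lemma map_take_ct_children_pmf:
  "m \<le> h \<Longrightarrow> map_pmf (take m) (ct_children_pmf D h) = ct_children_pmf D m"
proof (induction h)
  case 0
  then show ?case by simp
next
  case (Suc h)
  show ?case
  proof (cases "m = Suc h")
    case True
    then have "map_pmf (take m) (ct_children_pmf D (Suc h)) = map_pmf id (ct_children_pmf D (Suc h))"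
      by (intro pmf.map_cong refl) (auto dest: length_ct_children_pmf)
    then show ?thesis using True by simp
  next
    case False
    then have "m \<le> h" using Suc.prems by simp
    have "map_pmf (take m) (ct_children_pmf D (Suc h)) =
        bind_pmf (ct_children_pmf D h) (\<lambda>zs. map_pmf (\<lambda>z. take m (zs @ [z])) D)"
      by (simp add: map_bind_pmf pmf.map_comp o_def)
    also have "\<dots> = bind_pmf (ct_children_pmf D h) (\<lambda>zs. return_pmf (take m zs))"
      using \<open>m \<le> h\<close> by (intro bind_pmf_cong refl) (auto dest: length_ct_children_pmf)
    also have "\<dots> = ct_children_pmf D m" using Suc.IH \<open>m \<le> h\<close> by (simp add: map_pmf_def)
    finally show ?thesis .
  qed
qed

lemma map_truncate_ct_outcome_pmf:
  "m \<le> h \<Longrightarrow> map_pmf (map_option (take m)) (ct_outcome_pmf D p h) = ct_outcome_pmf D p m"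
  unfolding ct_outcome_pmf_def map_bind_pmf
  by (intro bind_pmf_cong refl) (auto simp: pmf.map_comp o_def map_take_ct_children_pmf[symmetric])

lemma ct_outcome_pmf_cases:
  assumes "ob \<in> set_pmf (ct_outcome_pmf D p h)"
  obtains "ob = None" | zs where "ob = Some zs" and "length zs = h"
  using assms unfolding ct_outcome_pmf_def by (auto split: if_splits dest: length_ct_children_pmf)

lemma count_ct_kids: "count (ct_kids zs) x = (if x < length zs then zs ! x else 0)"
  unfolding ct_kids_def count_sum by simp

lemma ct_kids_less: "x \<in># ct_kids zs \<Longrightarrow> x < length zs"
  by (metis count_ct_kids count_eq_zero_iff)

lemma filter_less_ct_kids: "m \<le> length zs \<Longrightarrow> {#x \<in># ct_kids zs. x < m#} = ct_kids (take m zs)"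
  by (auto simp: multiset_eq_iff count_ct_kids)

definition ct_obs_kids :: "ct_obs \<Rightarrow> nat multiset" where
  "ct_obs_kids ob = (case ob of None \<Rightarrow> {#} | Some zs \<Rightarrow> ct_kids zs)"

lemma ct_frontier_Cons: "ct_frontier F0 ((b, ob) # hs) = ct_frontier F0 hs - {#b#} + ct_obs_kids ob"
  by (simp add: ct_obs_kids_def)

lemma ct_obs_kids_less:
  assumes "ob \<in> set_pmf (ct_outcome_pmf D p h)" and "x \<in># ct_obs_kids ob"
  shows "x < h"
  using assms by (cases rule: ct_outcome_pmf_cases) (auto simp: ct_obs_kids_def dest: ct_kids_less)

lemma filter_less_ct_obs_kids:
  assumes "ob \<in> set_pmf (ct_outcome_pmf D p h)" and "m \<le> h"
  shows "{#x \<in># ct_obs_kids ob. x < m#} = ct_obs_kids (map_option (take m) ob)"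
  using assms by (cases rule: ct_outcome_pmf_cases) (auto simp: ct_obs_kids_def filter_less_ct_kids)

fun seq_reward :: "('a \<Rightarrow> ennreal) \<Rightarrow> ('a \<Rightarrow> ennreal) \<Rightarrow> 'a list \<Rightarrow> ennreal" where
  "seq_reward r l [] = 0"
| "seq_reward r l (x # xs) = r x + l x * seq_reward r l xs"

lemma seq_reward_append:
  "seq_reward r l (xs @ ys) = seq_reward r l xs + prod_list (map l xs) * seq_reward r l ys"
  by (induction xs) (auto simp: algebra_simps)

lemma seq_reward_cong:
  "(\<And>x. x \<in> set xs \<Longrightarrow> r x = r' x \<and> l x = l' x) \<Longrightarrow> seq_reward r l xs = seq_reward r' l' xs"
  by (induction xs) auto

lemma seq_reward_add_prod_le:
  assumes "\<And>x. x \<in> set xs \<Longrightarrow> r x + c * l x \<le> c"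
  shows "seq_reward r l xs + c * prod_list (map l xs) \<le> c"
  using assms
proof (induction xs)
  case Nil
  then show ?case by simp
next
  case (Cons x xs)
  have "seq_reward r l (x # xs) + c * prod_list (map l (x # xs)) =
      r x + l x * (seq_reward r l xs + c * prod_list (map l xs))"
    by (simp add: algebra_simps)
  also have "\<dots> \<le> r x + l x * c"
    using Cons by (intro add_left_mono mult_left_mono) auto
  also have "\<dots> \<le> c" using Cons.prems[of x] by (simp add: mult.commute)
  finally show ?case .
qed

definition sorted_reward :: "('a::linorder \<Rightarrow> ennreal) \<Rightarrow> ('a \<Rightarrow> ennreal) \<Rightarrow> 'a multiset \<Rightarrow> ennreal"
  where "sorted_reward r l M = seq_reward r l (sorted_list_of_multiset M)"

lemma sorted_reward_empty [simp]: "sorted_reward r l {#} = 0"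
  by (simp add: sorted_reward_def)

lemma sorted_reward_union:
  assumes "\<forall>x\<in>#A. \<forall>y\<in>#B. x \<le> y"
  shows "sorted_reward r l (A + B) = sorted_reward r l A + (\<Prod>x\<in>#A. l x) * sorted_reward r l B"
  unfolding sorted_reward_def sorted_list_of_multiset_union[OF assms] seq_reward_append
    prod_list_sorted_list_of_multiset ..

lemma sorted_reward_add_mset_least:
  assumes "\<forall>y\<in>#M. x \<le> y"
  shows "sorted_reward r l (add_mset x M) = r x + l x * sorted_reward r l M"
  using sorted_reward_union[of "{#x#}" M r l] assms by (simp add: sorted_reward_def)

lemma sorted_reward_cong:
  "(\<And>x. x \<in># M \<Longrightarrow> r x = r' x \<and> l x = l' x) \<Longrightarrow> sorted_reward r l M = sorted_reward r' l' M"
  unfolding sorted_reward_def by (rule seq_reward_cong) auto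

lemma sorted_reward_add_prod_le:
  assumes "\<And>x. x \<in># M \<Longrightarrow> r x + c * l x \<le> c"
  shows "sorted_reward r l M + c * (\<Prod>x\<in>#M. l x) \<le> c"
  using seq_reward_add_prod_le[of "sorted_list_of_multiset M" r c l] assms
  by (simp add: sorted_reward_def prod_list_sorted_list_of_multiset)

locale contact_tracing =
  fixes D :: "nat pmf" and p :: real and \<beta> :: real
  assumes beta_pos: "0 < \<beta>"
begin

definition \<gamma> :: real where "\<gamma> = exp (- \<beta>)"

lemma gamma_pos: "0 < \<gamma>" and gamma_less_1: "\<gamma> < 1"
  using beta_pos by (auto simp: \<gamma>_def)

abbreviation outcome :: "nat \<Rightarrow> ct_obs pmf" where
  "outcome h \<equiv> ct_outcome_pmf D p h"

definition obs_reward :: "nat \<Rightarrow> ct_obs \<Rightarrow> ennreal" where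
  "obs_reward h ob = (case ob of None \<Rightarrow> 0 | Some _ \<Rightarrow> ennreal (\<gamma> ^ h))"

lemma ct_benefit_eq: "ct_benefit \<beta> t h ob = ennreal (\<gamma> ^ t) * obs_reward h ob"
proof (cases ob)
  case None
  then show ?thesis by (simp add: ct_benefit_def obs_reward_def)
next
  case (Some zs)
  have "exp (- \<beta> * (real h + real t)) = exp (real t * (- \<beta>)) * exp (real h * (- \<beta>))"
    by (simp add: algebra_simps exp_add[symmetric])
  also have "\<dots> = \<gamma> ^ t * \<gamma> ^ h" unfolding \<gamma>_def by (simp only: exp_of_nat_mult)
  finally show ?thesis using Some gamma_pos by (simp add: ct_benefit_def obs_reward_def ennreal_mult)
qed

lemma obs_reward_le_1: "obs_reward h ob \<le> 1"
  using gamma_pos gamma_less_1 by (auto simp: obs_reward_def split: option.splits intro!: power_le_one)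

lemma obs_reward_le_truncated: "m \<le> b \<Longrightarrow> obs_reward b ob \<le> obs_reward m (map_option (take m) ob)"
  using gamma_pos gamma_less_1
  by (auto simp: obs_reward_def split: option.splits intro!: power_decreasing)

text \<open>\<open>subtree h = (r h, l h)\<close> from the header.  The recursion terminates because children of a
  node of recency \<open>h\<close> have recency below \<open>h\<close>; the default \<open>(0, 1)\<close> is never consulted.\<close>

definition subtree_step :: "(nat \<Rightarrow> ennreal \<times> ennreal) \<Rightarrow> nat \<Rightarrow> ennreal \<times> ennreal" where
  "subtree_step v h =
     ((\<integral>\<^sup>+ob. obs_reward h ob + ennreal \<gamma> * sorted_reward (fst \<circ> v) (snd \<circ> v) (ct_obs_kids ob) \<partial>outcome h),
      (\<integral>\<^sup>+ob. ennreal \<gamma> * (\<Prod>x\<in>#ct_obs_kids ob. snd (v x)) \<partial>outcome h))"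

function subtree :: "nat \<Rightarrow> ennreal \<times> ennreal" where
  "subtree h = subtree_step (\<lambda>j. if j < h then subtree j else (0, 1)) h"
  by auto
termination by lexicographic_order

declare subtree.simps [simp del]

definition subtree_reward :: "nat \<Rightarrow> ennreal" where
  "subtree_reward h = fst (subtree h)"

definition subtree_discount :: "nat \<Rightarrow> ennreal" where
  "subtree_discount h = snd (subtree h)"

abbreviation greedy_value :: "nat multiset \<Rightarrow> ennreal" where
  "greedy_value \<equiv> sorted_reward subtree_reward subtree_discount"

lemma subtree_eq_step: "subtree h = subtree_step subtree h"
proof -
  have "subtree_step (\<lambda>j. if j < h then subtree j else (0, 1)) h = subtree_step subtree h"
    unfolding subtree_step_def prod.inject
    by (auto intro!: nn_integral_pmf_cong sorted_reward_cong arg_cong[where f = prod_mset] image_mset_cong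
        arg_cong2[where f = "(+)"] arg_cong2[where f = "(*)"] dest: ct_obs_kids_less)
  then show ?thesis by (subst subtree.simps)
qed

lemma subtree_reward_eq:
  "subtree_reward h = (\<integral>\<^sup>+ob. obs_reward h ob + ennreal \<gamma> * greedy_value (ct_obs_kids ob) \<partial>outcome h)"
  using subtree_eq_step[of h]
  by (simp add: subtree_step_def comp_def subtree_reward_def[abs_def] subtree_discount_def[abs_def])

lemma subtree_discount_eq:
  "subtree_discount h = (\<integral>\<^sup>+ob. ennreal \<gamma> * (\<Prod>x\<in>#ct_obs_kids ob. subtree_discount x) \<partial>outcome h)"
  using subtree_eq_step[of h] by (simp add: subtree_step_def subtree_discount_def[abs_def])

definition value_bound :: ennreal where
  "value_bound = ennreal (1 / (1 - \<gamma>))"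

lemma value_bound_fixpoint: "1 + ennreal \<gamma> * value_bound = value_bound"
proof -
  have "ennreal \<gamma> * value_bound = ennreal (\<gamma> * (1 / (1 - \<gamma>)))"
    unfolding value_bound_def using gamma_pos gamma_less_1 by (subst ennreal_mult[symmetric]) auto
  also have "1 + \<dots> = ennreal (1 + \<gamma> * (1 / (1 - \<gamma>)))"
    using gamma_pos gamma_less_1 by simp
  also have "1 + \<gamma> * (1 / (1 - \<gamma>)) = 1 / (1 - \<gamma>)"
    using gamma_less_1 by (simp add: field_simps)
  finally show ?thesis unfolding value_bound_def .
qed

lemma subtree_reward_add_discount_le: "subtree_reward h + value_bound * subtree_discount h \<le> value_bound"
proof (induction h rule: less_induct)
  case (less h)
  have kids: "greedy_value (ct_obs_kids ob) + value_bound * (\<Prod>x\<in>#ct_obs_kids ob. subtree_discount x)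
      \<le> value_bound" if "ob \<in> set_pmf (outcome h)" for ob
    using less ct_obs_kids_less[OF that] by (intro sorted_reward_add_prod_le) auto
  have "subtree_reward h + value_bound * subtree_discount h =
      (\<integral>\<^sup>+ob. obs_reward h ob + ennreal \<gamma> *
         (greedy_value (ct_obs_kids ob) + value_bound * (\<Prod>x\<in>#ct_obs_kids ob. subtree_discount x)) \<partial>outcome h)"
    by (simp add: subtree_reward_eq[of h] subtree_discount_eq[of h] nn_integral_add nn_integral_cmult[symmetric]
        distrib_left mult.left_commute add.assoc)
  also have "\<dots> \<le> (\<integral>\<^sup>+ob. 1 + ennreal \<gamma> * value_bound \<partial>outcome h)"
    using kids by (intro nn_integral_pmf_mono add_mono obs_reward_le_1 mult_left_mono) auto
  also have "\<dots> = value_bound" by (simp add: value_bound_fixpoint)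
  finally show ?case .
qed

lemma subtree_discount_le_1: "subtree_discount h \<le> 1"
proof -
  have "value_bound * subtree_discount h \<le> subtree_reward h + value_bound * subtree_discount h"
    by simp
  also have "\<dots> \<le> value_bound * 1" using subtree_reward_add_discount_le[of h] by simp
  finally show ?thesis
    using gamma_less_1 by (subst (asm) ennreal_mult_le_mult_iff) (auto simp: value_bound_def)
qed

lemma greedy_value_le_bound: "greedy_value M \<le> value_bound"
proof -
  have "greedy_value M \<le> greedy_value M + value_bound * (\<Prod>x\<in>#M. subtree_discount x)" by simp
  also have "\<dots> \<le> value_bound" by (rule sorted_reward_add_prod_le) (rule subtree_reward_add_discount_le)
  finally show ?thesis .
qed

definition query_value :: "nat multiset \<Rightarrow> nat \<Rightarrow> ennreal" where
  "query_value F b =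
     (\<integral>\<^sup>+ob. obs_reward b ob + ennreal \<gamma> * greedy_value (F - {#b#} + ct_obs_kids ob) \<partial>outcome b)"

lemma query_value_split:
  assumes "\<forall>y\<in>#F. m \<le> y"
  shows "query_value F b =
    (\<integral>\<^sup>+ob. obs_reward b ob + ennreal \<gamma> * greedy_value {#x \<in># ct_obs_kids ob. x < m#} \<partial>outcome b) +
    (\<integral>\<^sup>+ob. ennreal \<gamma> * (\<Prod>x\<in>#{#x \<in># ct_obs_kids ob. x < m#}. subtree_discount x) *
       greedy_value (F - {#b#} + {#x \<in># ct_obs_kids ob. \<not> x < m#}) \<partial>outcome b)"
proof -
  have "greedy_value (F - {#b#} + ct_obs_kids ob) =
      greedy_value {#x \<in># ct_obs_kids ob. x < m#} +
      (\<Prod>x\<in>#{#x \<in># ct_obs_kids ob. x < m#}. subtree_discount x) *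
      greedy_value (F - {#b#} + {#x \<in># ct_obs_kids ob. \<not> x < m#})" for ob
  proof -
    have partition: "F - {#b#} + ct_obs_kids ob =
        {#x \<in># ct_obs_kids ob. x < m#} + (F - {#b#} + {#x \<in># ct_obs_kids ob. \<not> x < m#})"
      using multiset_partition[of "ct_obs_kids ob" "\<lambda>x. x < m"] by (metis add.left_commute add.commute)
    have "\<forall>x\<in>#{#x \<in># ct_obs_kids ob. x < m#}.
        \<forall>y\<in>#F - {#b#} + {#x \<in># ct_obs_kids ob. \<not> x < m#}. x \<le> y"
      using assms by (fastforce dest: in_diffD)
    then show ?thesis unfolding partition by (rule sorted_reward_union)
  qed
  then have "query_value F b =
    (\<integral>\<^sup>+ob. (obs_reward b ob + ennreal \<gamma> * greedy_value {#x \<in># ct_obs_kids ob. x < m#}) +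
       ennreal \<gamma> * (\<Prod>x\<in>#{#x \<in># ct_obs_kids ob. x < m#}. subtree_discount x) *
       greedy_value (F - {#b#} + {#x \<in># ct_obs_kids ob. \<not> x < m#}) \<partial>outcome b)"
    unfolding query_value_def by (intro nn_integral_cong) (simp only: distrib_left mult.assoc add.assoc)
  then show ?thesis by (subst (asm) nn_integral_add) auto
qed

text \<open>The children of recency below \<open>m\<close> of a node of recency \<open>b \<ge> m\<close> are distributed like all
  children of a node of recency \<open>m\<close>; only the benefit of the node itself is smaller.\<close>

lemma truncated_subtree_reward_le:
  assumes "m \<le> b"
  shows "(\<integral>\<^sup>+ob. obs_reward b ob + ennreal \<gamma> * greedy_value {#x \<in># ct_obs_kids ob. x < m#} \<partial>outcome b)
    \<le> subtree_reward m"
proof -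
  let ?trunc = "map_option (take m)"
  have "(\<integral>\<^sup>+ob. obs_reward b ob + ennreal \<gamma> * greedy_value {#x \<in># ct_obs_kids ob. x < m#} \<partial>outcome b)
      \<le> (\<integral>\<^sup>+ob. obs_reward m (?trunc ob) + ennreal \<gamma> * greedy_value (ct_obs_kids (?trunc ob)) \<partial>outcome b)"
    using assms by (intro nn_integral_pmf_mono)
      (simp add: filter_less_ct_obs_kids obs_reward_le_truncated add_right_mono)
  also have "\<dots> = (\<integral>\<^sup>+ob. obs_reward m ob + ennreal \<gamma> * greedy_value (ct_obs_kids ob)
      \<partial>map_pmf ?trunc (outcome b))"
    by simp
  also have "map_pmf ?trunc (outcome b) = outcome m"
    using assms by (rule map_truncate_ct_outcome_pmf)
  also have "(\<integral>\<^sup>+ob. obs_reward m ob + ennreal \<gamma> * greedy_value (ct_obs_kids ob) \<partial>outcome m) = subtree_reward m"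
    by (rule subtree_reward_eq[symmetric])
  finally show ?thesis .
qed

lemma truncated_subtree_discount_eq:
  assumes "m \<le> b"
  shows "(\<integral>\<^sup>+ob. ennreal \<gamma> * (\<Prod>x\<in>#{#x \<in># ct_obs_kids ob. x < m#}. subtree_discount x) \<partial>outcome b)
    = subtree_discount m"
proof -
  let ?trunc = "map_option (take m)"
  have "(\<integral>\<^sup>+ob. ennreal \<gamma> * (\<Prod>x\<in>#{#x \<in># ct_obs_kids ob. x < m#}. subtree_discount x) \<partial>outcome b)
      = (\<integral>\<^sup>+ob. ennreal \<gamma> * (\<Prod>x\<in>#ct_obs_kids (?trunc ob). subtree_discount x) \<partial>outcome b)"
    using assms by (intro nn_integral_pmf_cong) (simp add: filter_less_ct_obs_kids)
  also have "\<dots> = (\<integral>\<^sup>+ob. ennreal \<gamma> * (\<Prod>x\<in>#ct_obs_kids ob. subtree_discount x)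
      \<partial>map_pmf ?trunc (outcome b))"
    by simp
  also have "map_pmf ?trunc (outcome b) = outcome m"
    using assms by (rule map_truncate_ct_outcome_pmf)
  also have "(\<integral>\<^sup>+ob. ennreal \<gamma> * (\<Prod>x\<in>#ct_obs_kids ob. subtree_discount x) \<partial>outcome m) = subtree_discount m"
    by (rule subtree_discount_eq[symmetric])
  finally show ?thesis .
qed

lemma greedy_value_eq_query_value_Min:
  assumes "F \<noteq> {#}"
  shows "greedy_value F = query_value F (Min_mset F)"
proof -
  define m where "m = Min_mset F"
  have F: "F = add_mset m (F - {#m#})" and least: "\<forall>y\<in>#F. m \<le> y"
    using assms by (auto simp: m_def)
  have low: "{#x \<in># ct_obs_kids ob. x < m#} = ct_obs_kids ob"
    and high: "{#x \<in># ct_obs_kids ob. \<not> x < m#} = {#}" if "ob \<in> set_pmf (outcome m)" for ob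
    using ct_obs_kids_less[OF that] by (auto simp: filter_mset_eq_conv)
  have "query_value F m =
      (\<integral>\<^sup>+ob. obs_reward m ob + ennreal \<gamma> * greedy_value (ct_obs_kids ob) \<partial>outcome m) +
      (\<integral>\<^sup>+ob. ennreal \<gamma> * (\<Prod>x\<in>#ct_obs_kids ob. subtree_discount x) * greedy_value (F - {#m#}) \<partial>outcome m)"
    unfolding query_value_split[OF least]
    by (intro arg_cong2[where f = "(+)"] nn_integral_pmf_cong) (simp_all add: low high)
  also have "\<dots> = subtree_reward m + subtree_discount m * greedy_value (F - {#m#})"
    by (simp add: nn_integral_multc flip: subtree_reward_eq subtree_discount_eq)
  also have "\<dots> = greedy_value F"
    using least by (subst (2) F, intro sorted_reward_add_mset_least[symmetric]) (auto dest: in_diffD)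
  finally show ?thesis by (simp add: m_def)
qed

lemma query_value_add_mset_least_le:
  assumes least: "\<forall>y\<in>#G. m \<le> y" and "b \<in># G"
  shows "query_value (add_mset m G) b \<le> subtree_reward m + subtree_discount m * query_value G b"
proof -
  have "m \<le> b" using assms by blast
  define low where "low ob = {#x \<in># ct_obs_kids ob. x < m#}" for ob
  define high where "high ob = {#x \<in># ct_obs_kids ob. \<not> x < m#}" for ob
  define x where "x = (\<integral>\<^sup>+ob. obs_reward b ob + ennreal \<gamma> * greedy_value (low ob) \<partial>outcome b)"
  define z where "z = (\<integral>\<^sup>+ob. ennreal \<gamma> * (\<Prod>y\<in>#low ob. subtree_discount y) *
                         greedy_value (G - {#b#} + high ob) \<partial>outcome b)"
  have G_split: "query_value G b = x + z"
    unfolding x_def z_def low_def high_def by (rule query_value_split[OF least])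
  have shift: "greedy_value (add_mset m G - {#b#} + high ob) =
      subtree_reward m + subtree_discount m * greedy_value (G - {#b#} + high ob)" for ob
  proof -
    have "add_mset m G - {#b#} + high ob = add_mset m (G - {#b#} + high ob)"
      using \<open>b \<in># G\<close> by simp
    moreover have "\<forall>y\<in>#G - {#b#} + high ob. m \<le> y"
      using least by (auto simp: high_def dest: in_diffD)
    ultimately show ?thesis by (simp add: sorted_reward_add_mset_least)
  qed
  have least': "\<forall>y\<in>#add_mset m G. m \<le> y" using least by simp
  have "query_value (add_mset m G) b = x +
      (\<integral>\<^sup>+ob. ennreal \<gamma> * (\<Prod>y\<in>#low ob. subtree_discount y) *
         (subtree_reward m + subtree_discount m * greedy_value (G - {#b#} + high ob)) \<partial>outcome b)"
    unfolding query_value_split[OF least'] shift[unfolded high_def] x_def low_def high_def ..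
  also have "\<dots> = x +
      ((\<integral>\<^sup>+ob. subtree_reward m * (ennreal \<gamma> * (\<Prod>y\<in>#low ob. subtree_discount y)) \<partial>outcome b) +
       (\<integral>\<^sup>+ob. subtree_discount m * (ennreal \<gamma> * (\<Prod>y\<in>#low ob. subtree_discount y) *
          greedy_value (G - {#b#} + high ob)) \<partial>outcome b))"
    by (subst nn_integral_add[symmetric]) (auto intro!: nn_integral_cong simp: algebra_simps)
  also have "\<dots> = x + subtree_reward m * subtree_discount m + subtree_discount m * z"
    unfolding z_def low_def
    by (simp add: nn_integral_cmult truncated_subtree_discount_eq[OF \<open>m \<le> b\<close>] add.assoc)
  also have "\<dots> \<le> subtree_reward m + subtree_discount m * (x + z)"
  proof -
    \<comment> \<open>\<open>x\<close> is the job formed by \<open>b\<close> and its children below \<open>m\<close>; swap it with the subtree of \<open>m\<close>.\<close>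
    have "x \<le> subtree_reward m"
      unfolding x_def low_def using \<open>m \<le> b\<close> by (rule truncated_subtree_reward_le)
    from exchange_le_ennreal[OF this subtree_discount_le_1]
    show ?thesis by (simp add: distrib_left add_right_mono flip: add.assoc)
  qed
  finally show ?thesis unfolding G_split .
qed

lemma query_value_le_greedy_value:
  assumes "b \<in># F"
  shows "query_value F b \<le> greedy_value F"
  using assms
proof (induction "size F" arbitrary: F rule: less_induct)
  case less
  define m where "m = Min_mset F"
  define G where "G = F - {#m#}"
  have "F \<noteq> {#}" using less.prems by auto
  then have F: "F = add_mset m G" and least: "\<forall>y\<in>#G. m \<le> y"
    by (auto simp: m_def G_def dest: in_diffD)
  show ?case
  proof (cases "b = m")
    case True
    then show ?thesis using greedy_value_eq_query_value_Min[OF \<open>F \<noteq> {#}\<close>] by (simp add: m_def)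
  next
    case False
    then have "b \<in># G" using less.prems F by simp
    have "query_value F b \<le> subtree_reward m + subtree_discount m * query_value G b"
      unfolding F using least \<open>b \<in># G\<close> by (rule query_value_add_mset_least_le)
    also have "\<dots> \<le> subtree_reward m + subtree_discount m * greedy_value G"
      using less.hyps[of G] \<open>b \<in># G\<close> F by (intro add_left_mono mult_left_mono) auto
    also have "\<dots> = greedy_value F"
      unfolding F using least by (rule sorted_reward_add_mset_least[symmetric])
    finally show ?thesis .
  qed
qed

lemma ct_val_le_greedy_value:
  assumes "ct_admissible F0 \<sigma>"
  shows "ct_val D p \<beta> \<sigma> F0 n hs \<le> ennreal (\<gamma> ^ length hs) * greedy_value (ct_frontier F0 hs)"
proof (induction n arbitrary: hs)
  case 0
  then show ?case by simp
next
  case (Suc n)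
  let ?F = "ct_frontier F0 hs" and ?t = "length hs" and ?b = "\<sigma> hs"
  show ?case
  proof (cases "?F = {#}")
    case True
    then show ?thesis by simp
  next
    case False
    then have "?b \<in># ?F" using assms unfolding ct_admissible_def by blast
    have "ct_val D p \<beta> \<sigma> F0 (Suc n) hs =
        (\<integral>\<^sup>+ob. ct_benefit \<beta> ?t ?b ob + ct_val D p \<beta> \<sigma> F0 n ((?b, ob) # hs) \<partial>outcome ?b)"
      using False by simp
    also have "\<dots> \<le> (\<integral>\<^sup>+ob. ennreal (\<gamma> ^ ?t) *
        (obs_reward ?b ob + ennreal \<gamma> * greedy_value (?F - {#?b#} + ct_obs_kids ob)) \<partial>outcome ?b)"
    proof (rule nn_integral_pmf_mono)
      fix ob
      have "ct_val D p \<beta> \<sigma> F0 n ((?b, ob) # hs)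
          \<le> ennreal (\<gamma> ^ ?t) * (ennreal \<gamma> * greedy_value (?F - {#?b#} + ct_obs_kids ob))"
        using Suc.IH[of "(?b, ob) # hs"] gamma_pos unfolding ct_frontier_Cons
        by (simp add: ennreal_mult ac_simps)
      then show "ct_benefit \<beta> ?t ?b ob + ct_val D p \<beta> \<sigma> F0 n ((?b, ob) # hs) \<le> ennreal (\<gamma> ^ ?t) *
          (obs_reward ?b ob + ennreal \<gamma> * greedy_value (?F - {#?b#} + ct_obs_kids ob))"
        by (simp add: ct_benefit_eq distrib_left add_left_mono)
    qed
    also have "\<dots> = ennreal (\<gamma> ^ ?t) * query_value ?F ?b"
      unfolding query_value_def by (rule nn_integral_cmult) simp
    also have "\<dots> \<le> ennreal (\<gamma> ^ ?t) * greedy_value ?F"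
      using \<open>?b \<in># ?F\<close> by (intro mult_left_mono query_value_le_greedy_value) auto
    finally show ?thesis .
  qed
qed

lemma greedy_value_le_ct_val_greedy:
  "ennreal (\<gamma> ^ length hs) * greedy_value (ct_frontier F0 hs)
     \<le> ct_val D p \<beta> (ct_greedy F0) F0 n hs + ennreal (\<gamma> ^ (length hs + n)) * value_bound"
proof (induction n arbitrary: hs)
  case 0
  then show ?case using greedy_value_le_bound by (simp add: mult_left_mono)
next
  case (Suc n)
  let ?F = "ct_frontier F0 hs" and ?t = "length hs" and ?b = "ct_greedy F0 hs"
  let ?tail = "ennreal (\<gamma> ^ (?t + Suc n)) * value_bound"
  show ?case
  proof (cases "?F = {#}")
    case True
    then show ?thesis by simp
  next
    case False
    have "ennreal (\<gamma> ^ ?t) * greedy_value ?F = ennreal (\<gamma> ^ ?t) * query_value ?F ?b"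
      using greedy_value_eq_query_value_Min[OF False] by (simp add: ct_greedy_def)
    also have "\<dots> = (\<integral>\<^sup>+ob. ennreal (\<gamma> ^ ?t) *
        (obs_reward ?b ob + ennreal \<gamma> * greedy_value (?F - {#?b#} + ct_obs_kids ob)) \<partial>outcome ?b)"
      unfolding query_value_def by (rule nn_integral_cmult[symmetric]) simp
    also have "\<dots> \<le> (\<integral>\<^sup>+ob. (ct_benefit \<beta> ?t ?b ob + ct_val D p \<beta> (ct_greedy F0) F0 n ((?b, ob) # hs))
        + ?tail \<partial>outcome ?b)"
    proof (rule nn_integral_pmf_mono)
      fix ob
      have "ennreal (\<gamma> ^ ?t) * (ennreal \<gamma> * greedy_value (?F - {#?b#} + ct_obs_kids ob))
          \<le> ct_val D p \<beta> (ct_greedy F0) F0 n ((?b, ob) # hs) + ?tail"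
        using Suc.IH[of "(?b, ob) # hs"] gamma_pos unfolding ct_frontier_Cons
        by (simp add: ennreal_mult ac_simps)
      then show "ennreal (\<gamma> ^ ?t) *
          (obs_reward ?b ob + ennreal \<gamma> * greedy_value (?F - {#?b#} + ct_obs_kids ob))
          \<le> (ct_benefit \<beta> ?t ?b ob + ct_val D p \<beta> (ct_greedy F0) F0 n ((?b, ob) # hs)) + ?tail"
        by (simp add: ct_benefit_eq distrib_left add.assoc add_left_mono)
    qed
    also have "\<dots> = ct_val D p \<beta> (ct_greedy F0) F0 (Suc n) hs + ?tail"
      using False by (simp add: nn_integral_add)
    finally show ?thesis .
  qed
qed

lemma ct_expected_benefit_le_greedy:
  assumes "ct_admissible F0 \<sigma>"
  shows "ct_expected_benefit D p \<beta> \<sigma> F0 \<le> ct_expected_benefit D p \<beta> (ct_greedy F0) F0"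
proof -
  have "ct_expected_benefit D p \<beta> \<sigma> F0 \<le> greedy_value F0"
    unfolding ct_expected_benefit_def
    using ct_val_le_greedy_value[OF assms, of _ "[]"] by (intro SUP_least) simp
  also have "\<dots> \<le> ct_expected_benefit D p \<beta> (ct_greedy F0) F0"
  proof (rule ennreal_le_of_le_add_power)
    show "value_bound < \<top>" by (simp add: value_bound_def)
    fix n
    have "greedy_value F0 \<le> ct_val D p \<beta> (ct_greedy F0) F0 n [] + ennreal (\<gamma> ^ n) * value_bound"
      using greedy_value_le_ct_val_greedy[of "[]" F0 n] by simp
    also have "\<dots> \<le> ct_expected_benefit D p \<beta> (ct_greedy F0) F0 + ennreal (\<gamma> ^ n) * value_bound"
      unfolding ct_expected_benefit_def by (intro add_right_mono SUP_upper) auto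
    finally show "greedy_value F0 \<le> \<dots>" .
  qed (use gamma_pos gamma_less_1 in auto)
  finally show ?thesis .
qed

end

lemma ct_admissible_greedy: "ct_admissible F0 (ct_greedy F0)"
  unfolding ct_admissible_def ct_greedy_def by auto

theorem theorem5p1:
  fixes T :: nat and D :: "nat pmf" and p\<^sub>T :: real and \<beta> :: real
  assumes "0 < p\<^sub>T" and "p\<^sub>T \<le> 1" and "0 < \<beta>"
  shows "ct_optimal T D p\<^sub>T \<beta> ct_greedy"
proof -
  interpret contact_tracing D p\<^sub>T \<beta> using \<open>0 < \<beta>\<close> by unfold_locales
  show ?thesis
    unfolding ct_optimal_def using ct_admissible_greedy ct_expected_benefit_le_greedy by blast
qed

end
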